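(* Let $K$ be a field, $B$ the algebra of upper triangular $2\times2$ matrices over $K$, and $A=M_3(K)$, with $B$ embedded in $A$ via $\begin{pmatrix}x&y\\0&z\end{pmatrix}\mapsto\begin{pmatrix}x&0&0\\0&x&y\\0&0&z\end{pmatrix}$ (this is left multiplication $B\to\mathrm{End}(B_K)\cong M_3(K)$ in the ordered basis $e_{11},e_{12},e_{22}$). Then ${}_BA$ is free of rank $3$, $A\otimes_BA\cong A^3$ as $A$-$A$-bimodules (so $A\| B$ is H-separable, in particular D2), but $A\| B$ is not a Frobenius extension and there is no $B$-$B$-bimodule projection $A\to B$.
   Context: An algebra extension $A\| B$ is H-separable if $A\otimes_BA$ is isomorphic as an $A$-$A$-bimodule to a direct summand of a finite direct sum $A^n$. It is a Frobenius extension if $A_B$ is finitely generated projective and $A\cong\mathrm{Hom}(A_B,B_B)$ as $B$-$A$-bimodules. It is D2 if $A\otimes_BA$ is isomorphic to a direct summand of some $A^n$ both as $A$-$B$-bimodules and as $B$-$A$-bimodules. *)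

theory Defs
  imports "HOL-Analysis.Analysis"
begin

text \<open>An algebra extension A | B is given by a set Bs of m x m matrices (the algebra B,
  closed under \<open>**\<close>) together with an (injective, unital) algebra map
  \<open>\<iota> : B \<rightarrow> A = M_n(K)\<close>; all module structures of A over B are through \<open>\<iota>\<close>.\<close>

definition ut2 :: "('k::field ^ 2 ^ 2) set" where
  "ut2 = {M. M $ 2 $ 1 = 0}"

definition emb :: "'k::field ^ 2 ^ 2 \<Rightarrow> 'k ^ 3 ^ 3" where
  "emb M = vector [vector [M $ 1 $ 1, 0, 0],
                   vector [0, M $ 1 $ 1, M $ 1 $ 2],
                   vector [0, 0, M $ 2 $ 2]]"

definition left_free_rank ::
  "('k::field ^ 'm ^ 'm) set \<Rightarrow> ('k ^ 'm ^ 'm \<Rightarrow> 'k ^ 'n ^ 'n) \<Rightarrow> nat \<Rightarrow> bool" where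
  "left_free_rank Bs \<iota> n \<longleftrightarrow>
     (\<exists>a :: nat \<Rightarrow> 'k ^ 'n ^ 'n. \<forall>x.
        \<exists>!c :: nat \<Rightarrow> 'k ^ 'm ^ 'm. (\<forall>i<n. c i \<in> Bs) \<and> (\<forall>i\<ge>n. c i = 0) \<and>
              x = (\<Sum>i<n. \<iota> (c i) ** a i))"

text \<open>A \<otimes>_K A is modelled as K^((n x n) x (n x n)), with pure tensors \<open>tens x y\<close>.\<close>
definition tens :: "'k::field ^ 'n ^ 'n \<Rightarrow> 'k ^ 'n ^ 'n \<Rightarrow> 'k ^ (('n \<times> 'n) \<times> ('n \<times> 'n))" where
  "tens x y = (\<chi> pq. x $ fst (fst pq) $ snd (fst pq) * y $ fst (snd pq) $ snd (snd pq))"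

text \<open>The B-balancing relations x b \<otimes> y - x \<otimes> b y; A \<otimes>_B A is the quotient of
  A \<otimes>_K A by their span.\<close>
definition balrel ::
  "('k::field ^ 'm ^ 'm) set \<Rightarrow> ('k ^ 'm ^ 'm \<Rightarrow> 'k ^ 'n ^ 'n) \<Rightarrow> ('k ^ (('n \<times> 'n) \<times> ('n \<times> 'n))) set" where
  "balrel Bs \<iota> = {tens (x ** \<iota> b) y - tens x (\<iota> b ** y) | x y b. b \<in> Bs}"

text \<open>\<open>f\<close> induces an A-A-bimodule isomorphism A \<otimes>_B A \<cong> A^I (componentwise bimodule
  structure on A^I): f is K-linear on A \<otimes>_K A, compatible with the bimodule actions
  a (x \<otimes> y) a' = a x \<otimes> y a', its kernel is exactly the span of the balancing relations,
  and it is surjective.\<close>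
definition tensor_iso_power ::
  "('k::field ^ 'm ^ 'm) set \<Rightarrow> ('k ^ 'm ^ 'm \<Rightarrow> 'k ^ 'n ^ 'n)
     \<Rightarrow> ('i \<Rightarrow> 'k ^ (('n \<times> 'n) \<times> ('n \<times> 'n)) \<Rightarrow> 'k ^ 'n ^ 'n) \<Rightarrow> bool" where
  "tensor_iso_power Bs \<iota> f \<longleftrightarrow>
     (\<forall>i s t. f i (s + t) = f i s + f i t) \<and>
     (\<forall>i c t. f i (c *s t) = mat c ** f i t) \<and>
     (\<forall>i a x y a'. f i (tens (a ** x) (y ** a')) = a ** f i (tens x y) ** a') \<and>
     (\<forall>t. (\<forall>i. f i t = 0) \<longleftrightarrow> t \<in> vec.span (balrel Bs \<iota>)) \<and>
     (\<forall>g. \<exists>t. \<forall>i. f i t = g i)"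

definition right_hom ::
  "('k::field ^ 'm ^ 'm) set \<Rightarrow> ('k ^ 'm ^ 'm \<Rightarrow> 'k ^ 'n ^ 'n) \<Rightarrow> ('k ^ 'n ^ 'n \<Rightarrow> 'k ^ 'm ^ 'm) \<Rightarrow> bool" where
  "right_hom Bs \<iota> \<phi> \<longleftrightarrow>
     (\<forall>x. \<phi> x \<in> Bs) \<and> (\<forall>x y. \<phi> (x + y) = \<phi> x + \<phi> y) \<and>
     (\<forall>x b. b \<in> Bs \<longrightarrow> \<phi> (x ** \<iota> b) = \<phi> x ** b)"

text \<open>A_B finitely generated projective: A_B is a direct summand (retract) of B^n, written
  with the retraction B^n \<rightarrow> A, (v_i) \<mapsto> \<Sum> a_i v_i, and the section x \<mapsto> (\<phi>_i x),
  with each \<phi>_i right B-linear.\<close>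
definition right_fgp ::
  "('k::field ^ 'm ^ 'm) set \<Rightarrow> ('k ^ 'm ^ 'm \<Rightarrow> 'k ^ 'n ^ 'n) \<Rightarrow> bool" where
  "right_fgp Bs \<iota> \<longleftrightarrow>
     (\<exists>n (a :: nat \<Rightarrow> 'k ^ 'n ^ 'n) (\<phi> :: nat \<Rightarrow> 'k ^ 'n ^ 'n \<Rightarrow> 'k ^ 'm ^ 'm).
        (\<forall>i<n. right_hom Bs \<iota> (\<phi> i)) \<and>
        (\<forall>x. x = (\<Sum>i<n. a i ** \<iota> (\<phi> i x))))"

text \<open>Frobenius extension: A_B f.g. projective and A \<cong> Hom(A_B, B_B) as B-A-bimodules,
  where (b \<phi> a)(x) = b \<phi>(a x).\<close>
definition frobenius_ext ::
  "('k::field ^ 'm ^ 'm) set \<Rightarrow> ('k ^ 'm ^ 'm \<Rightarrow> 'k ^ 'n ^ 'n) \<Rightarrow> bool" where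
  "frobenius_ext Bs \<iota> \<longleftrightarrow>
     right_fgp Bs \<iota> \<and>
     (\<exists>\<Phi> :: 'k ^ 'n ^ 'n \<Rightarrow> ('k ^ 'n ^ 'n \<Rightarrow> 'k ^ 'm ^ 'm).
        bij_betw \<Phi> UNIV {\<phi>. right_hom Bs \<iota> \<phi>} \<and>
        (\<forall>a a'. \<Phi> (a + a') = (\<lambda>x. \<Phi> a x + \<Phi> a' x)) \<and>
        (\<forall>b a a'. b \<in> Bs \<longrightarrow> \<Phi> (\<iota> b ** a ** a') = (\<lambda>x. b ** \<Phi> a (a' ** x))))"

definition bimod_projection ::
  "('k::field ^ 'm ^ 'm) set \<Rightarrow> ('k ^ 'm ^ 'm \<Rightarrow> 'k ^ 'n ^ 'n) \<Rightarrow> ('k ^ 'n ^ 'n \<Rightarrow> 'k ^ 'm ^ 'm) \<Rightarrow> bool" where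
  "bimod_projection Bs \<iota> E \<longleftrightarrow>
     (\<forall>x. E x \<in> Bs) \<and> (\<forall>x y. E (x + y) = E x + E y) \<and>
     (\<forall>b b' x. b \<in> Bs \<longrightarrow> b' \<in> Bs \<longrightarrow> E (\<iota> b ** x ** \<iota> b') = b ** E x ** b') \<and>
     (\<forall>b \<in> Bs. E (\<iota> b) = b)"

end

theory Submission
  imports Defs
begin

(*
  Under emb, B acts on K^3 as on itself by left multiplication in the basis e11, e12, e22, so
  every column of A = M_3(K) is a free left B-module of rank one and A is free of rank 3.

  The matrices C_1 = e11, C_2 = e21, C_3 = e22 + e33 commute with emb B, hence
  x \<otimes> y \<mapsto> (x C_i y)_i is a well-defined A-A-bimodule map A \<otimes>_B A \<rightarrow> A^3.
  Split A \<otimes>_K A into the blocks spanned by the e_aq \<otimes> e_rb with (q, r) fixed. Balancing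
  against emb e22 = e33 and emb e12 = e23 kills every block with
  (q, r) \<notin> {(1,1), (2,1), (2,2), (3,3)} and identifies block (3,3) with block (2,2), and
  this is exactly the kernel of the map.

  Every right B-linear map \<phi> : A \<rightarrow> B vanishes at e11: since e11 emb(e12) = e11 emb(e22) = 0,
  \<phi>(e11) is annihilated on the right by e12 and e22, hence is 0. So A_B is not a direct
  summand of a free module. Finally, a bimodule projection E would give
  e12 = E(e23) = E(emb(e12) e32 emb(e12)) = e12 E(e32) e12 = 0, as E(e32) is upper triangular.
*)

definition matrix_unit :: "'n::finite \<Rightarrow> 'n \<Rightarrow> 'k::field ^ 'n ^ 'n" where
  "matrix_unit i j = (\<chi> p q. of_bool (p = i \<and> q = j))"

lemma matrix_unit_mult:
  "matrix_unit a q ** matrix_unit r b = (if q = r then matrix_unit a b else 0)"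
  by (simp add: matrix_unit_def matrix_matrix_mult_def vec_eq_iff of_bool_conj sum.delta)

lemma matrix_unit_mult_mult_eq_0:
  assumes "X $ q $ r = 0"
  shows "matrix_unit a q ** X ** matrix_unit r b = 0"
  using assms
  by (simp add: matrix_unit_def matrix_matrix_mult_def vec_eq_iff of_bool_conj sum.delta)

lemma matrix_mult_matrix_unit_nth: "(Y ** matrix_unit q r) $ i $ r = Y $ i $ q"
  by (simp add: matrix_unit_def matrix_matrix_mult_def)

lemma emb_matrix_unit:
  "emb (matrix_unit 1 2) = (matrix_unit 2 3 :: 'k::field ^ 3 ^ 3)"
  "emb (matrix_unit 2 2) = (matrix_unit 3 3 :: 'k::field ^ 3 ^ 3)"
  by (simp_all add: emb_def matrix_unit_def vec_eq_iff forall_3)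

lemma matrix_unit_in_ut2:
  "(matrix_unit 1 2 :: 'k::field ^ 2 ^ 2) \<in> ut2" "(matrix_unit 2 2 :: 'k::field ^ 2 ^ 2) \<in> ut2"
  by (simp_all add: ut2_def matrix_unit_def)

lemma matrix_unit_neq_0: "matrix_unit i j \<noteq> 0"
  by (auto simp: matrix_unit_def vec_eq_iff)

section \<open>Freeness of A over B\<close>

definition column_matrix :: "'n::finite \<Rightarrow> 'k::field ^ 'm \<Rightarrow> 'k ^ 'n ^ 'm" where
  "column_matrix j v = (\<chi> p q. if q = j then v $ p else 0)"

lemma column_mult_column_matrix:
  "column j' (M ** column_matrix j v) = (if j' = j then M *v v else 0)"
  by (auto simp: column_def column_matrix_def matrix_matrix_mult_def matrix_vector_mult_def
      vec_eq_iff if_distrib cong: if_cong)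

lemma column_sum: "finite I \<Longrightarrow> column j (\<Sum>i\<in>I. M i) = (\<Sum>i\<in>I. column j (M i))"
  by (induction I rule: finite_induct) (auto simp: column_def vec_eq_iff)

lemma column_sum_mult_column_matrix:
  fixes n :: nat
  assumes "inj_on col {..<n}" "j < n"
  shows "column (col j) (\<Sum>i<n. M i ** column_matrix (col i) v) = M j *v v"
proof -
  have "column (col j) (\<Sum>i<n. M i ** column_matrix (col i) v)
      = (\<Sum>i<n. if i = j then M j *v v else 0)"
    unfolding column_sum[OF finite_lessThan] column_mult_column_matrix
    using assms by (intro sum.cong) (auto simp: inj_on_eq_iff)
  then show ?thesis using assms(2) by simp
qed

lemma eq_sum_mult_column_matrix_iff:
  fixes n :: nat
  assumes col: "bij_betw col {..<n} UNIV"
  shows "x = (\<Sum>i<n. M i ** column_matrix (col i) v) \<longleftrightarrow> (\<forall>i<n. M i *v v = column (col i) x)"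
proof -
  have inj_col: "inj_on col {..<n}" using col by (rule bij_betw_imp_inj_on)
  have "x = (\<Sum>i<n. M i ** column_matrix (col i) v)
      \<longleftrightarrow> (\<forall>j. column j x = column j (\<Sum>i<n. M i ** column_matrix (col i) v))"
    by (auto simp: column_def vec_eq_iff)
  also have "\<dots> \<longleftrightarrow>
      (\<forall>j \<in> col ` {..<n}. column j x = column j (\<Sum>i<n. M i ** column_matrix (col i) v))"
    using col by (simp add: bij_betw_def)
  also have "\<dots> \<longleftrightarrow> (\<forall>i<n. M i *v v = column (col i) x)"
    using column_sum_mult_column_matrix[OF inj_col, where M = M and v = v] by auto
  finally show ?thesis .
qed

lemma left_free_rank_of_cyclic_vector:
  fixes \<iota> :: "'k::field ^ 'l ^ 'l \<Rightarrow> 'k ^ 'm ^ 'm" and col :: "nat \<Rightarrow> 'm"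
  assumes cyclic: "bij_betw (\<lambda>b. \<iota> b *v v) Bs UNIV" and col: "bij_betw col {..<n} UNIV"
  shows "left_free_rank Bs \<iota> n"
  unfolding left_free_rank_def
proof (intro exI[of _ "\<lambda>i. column_matrix (col i) v"] allI)
  fix x :: "'k ^ 'm ^ 'm"
  let ?coord = "inv_into Bs (\<lambda>b. \<iota> b *v v)"
  have coord: "?coord w \<in> Bs" "\<iota> (?coord w) *v v = w" for w
    using cyclic unfolding bij_betw_def by (auto intro: inv_into_into f_inv_into_f)
  show "\<exists>!c. (\<forall>i<n. c i \<in> Bs) \<and> (\<forall>i\<ge>n. c i = 0) \<and>
      x = (\<Sum>i<n. \<iota> (c i) ** column_matrix (col i) v)"
    unfolding eq_sum_mult_column_matrix_iff[OF col]
  proof (rule ex1I)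
    fix d
    assume d: "(\<forall>i<n. d i \<in> Bs) \<and> (\<forall>i\<ge>n. d i = 0) \<and>
      (\<forall>i<n. \<iota> (d i) *v v = column (col i) x)"
    show "d = (\<lambda>i. if i < n then ?coord (column (col i) x) else 0)"
    proof
      fix i
      show "d i = (if i < n then ?coord (column (col i) x) else 0)"
      proof (cases "i < n")
        case True
        then have "?coord (column (col i) x) = ?coord (\<iota> (d i) *v v)" using d by simp
        also have "\<dots> = d i"
          by (rule inv_into_f_f) (use True d cyclic in \<open>auto simp: bij_betw_def\<close>)
        finally show ?thesis using True by simp
      qed (use d in simp)
    qed
  qed (use coord in auto)
qed

text \<open>(1, 0, 1) are the coordinates of the identity of B in the basis e11, e12, e22, so
  \<open>emb b *v (1, 0, 1)\<close> are the coordinates of b.\<close>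
lemma emb_cyclic_vector:
  "bij_betw (\<lambda>b. emb b *v vector [1, 0, 1]) ut2 (UNIV :: ('k::field ^ 3) set)"
proof (rule bij_betw_byWitness)
  let ?coords = "\<lambda>w :: 'k ^ 3. vector [vector [w $ 1, w $ 2], vector [0, w $ 3]] :: 'k ^ 2 ^ 2"
  show "\<forall>b \<in> ut2. ?coords (emb b *v vector [1, 0, 1]) = b"
    by (auto simp: ut2_def emb_def matrix_vector_mult_def vec_eq_iff forall_2 sum_3)
  show "\<forall>w \<in> UNIV. emb (?coords w) *v vector [1, 0, 1] = w"
    by (simp add: emb_def matrix_vector_mult_def vec_eq_iff forall_3 sum_3)
qed (auto simp: ut2_def)

lemma left_free_rank_ut2_emb: "left_free_rank (ut2 :: ('k::field ^ 2 ^ 2) set) emb 3"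
proof (rule left_free_rank_of_cyclic_vector[OF emb_cyclic_vector])
  show "bij_betw ((!) [1, 2, 3 :: 3]) {..<3} UNIV"
    by (rule bij_betw_nth) (use exhaust_3 in auto)
qed

section \<open>The tensor square of A over B\<close>

definition contract ::
  "'k::field ^ 'n ^ 'n \<Rightarrow> 'k ^ (('n \<times> 'n) \<times> ('n \<times> 'n)) \<Rightarrow> 'k ^ 'n ^ 'n" where
  "contract C t = (\<chi> a b. \<Sum>q\<in>UNIV. \<Sum>r\<in>UNIV. t $ ((a, q), (r, b)) * C $ q $ r)"

definition place_block ::
  "'n::finite \<Rightarrow> 'n \<Rightarrow> 'k::field ^ 'n ^ 'n \<Rightarrow> 'k ^ (('n \<times> 'n) \<times> ('n \<times> 'n))" where
  "place_block q r g =
     (\<chi> k. of_bool (snd (fst k) = q \<and> fst (snd k) = r) * g $ fst (fst k) $ snd (snd k))"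

lemma mat_mult_nth: "(mat c ** g) $ a $ b = c * g $ a $ b"
  by (simp add: mat_def matrix_matrix_mult_def if_distrib if_distribR cong: if_cong)

lemma tens_zero: "tens 0 y = 0" "tens x 0 = 0"
  by (simp_all add: tens_def vec_eq_iff)

lemma contract_tens: "contract C (tens x y) = x ** C ** y"
proof -
  have "(x ** C ** y) $ a $ b = contract C (tens x y) $ a $ b" for a b
  proof -
    have "(x ** C ** y) $ a $ b = (\<Sum>r\<in>UNIV. (\<Sum>q\<in>UNIV. x $ a $ q * C $ q $ r) * y $ r $ b)"
      by (simp add: matrix_matrix_mult_def)
    also have "\<dots> = (\<Sum>r\<in>UNIV. \<Sum>q\<in>UNIV. x $ a $ q * y $ r $ b * C $ q $ r)"
      unfolding sum_distrib_right by (simp add: mult_ac)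
    also have "\<dots> = (\<Sum>q\<in>UNIV. \<Sum>r\<in>UNIV. x $ a $ q * y $ r $ b * C $ q $ r)"
      by (rule sum.swap)
    also have "\<dots> = contract C (tens x y) $ a $ b"
      by (simp add: contract_def tens_def)
    finally show ?thesis .
  qed
  then show ?thesis by (simp add: vec_eq_iff)
qed

lemma contract_add: "contract C (s + t) = contract C s + contract C t"
  by (simp add: contract_def vec_eq_iff distrib_right sum.distrib)

lemma contract_diff: "contract C (s - t) = contract C s - contract C t"
  by (simp add: contract_def vec_eq_iff left_diff_distrib sum_subtractf)

lemma contract_scale: "contract C (c *s t) = mat c ** contract C t"
  by (simp add: vec_eq_iff mat_mult_nth contract_def sum_distrib_left mult.assoc)

lemma contract_zero: "contract C 0 = 0"
  by (simp add: contract_def vec_eq_iff)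

lemma contract_add_matrix: "contract (C + D) t = contract C t + contract D t"
  by (simp add: contract_def vec_eq_iff distrib_left sum.distrib)

lemma place_block_zero: "place_block q r 0 = 0"
  by (simp add: place_block_def vec_eq_iff)

lemma place_block_uminus: "place_block q r (- g) = - place_block q r g"
  by (simp add: place_block_def vec_eq_iff)

lemma sum_sum_of_bool_delta:
  fixes f :: "'a::finite \<Rightarrow> 'b::finite \<Rightarrow> 'c::semiring_1"
  shows "(\<Sum>x\<in>UNIV. \<Sum>y\<in>UNIV. of_bool (x = a \<and> y = b) * f x y) = f a b"
proof -
  have "(\<Sum>y\<in>UNIV. of_bool (x = a \<and> y = b) * f x y) = of_bool (x = a) * f x b" for x
    by (cases "x = a") simp_all
  then show ?thesis by simp
qed

lemma place_block_nth:
  "place_block q r g $ ((a, q'), (r', b)) = of_bool (q' = q \<and> r' = r) * g $ a $ b"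
  by (simp add: place_block_def)

lemma contract_matrix_unit: "contract (matrix_unit q r) t $ a $ b = t $ ((a, q), (r, b))"
  using sum_sum_of_bool_delta[of q r "\<lambda>q r. t $ ((a, q), (r, b))"]
  by (simp add: contract_def matrix_unit_def mult.commute
      del: sum_of_bool_mult_eq sum_mult_of_bool_eq)

lemma contract_place_block: "contract C (place_block q r g) = mat (C $ q $ r) ** g"
proof -
  have "contract C (place_block q r g) $ a $ b = C $ q $ r * g $ a $ b" for a b
    using sum_sum_of_bool_delta[of q r "\<lambda>q r. g $ a $ b * C $ q $ r"]
    by (simp add: contract_def place_block_nth mult.assoc
        del: sum_of_bool_mult_eq sum_mult_of_bool_eq)
  then show ?thesis by (simp add: vec_eq_iff mat_mult_nth)
qed

lemma sum_place_block_contract: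
  "(\<Sum>q\<in>UNIV. \<Sum>r\<in>UNIV. place_block q r (contract (matrix_unit q r) t)) = t"
proof -
  have "(\<Sum>q\<in>UNIV. \<Sum>r\<in>UNIV. place_block q r (contract (matrix_unit q r) t))
      $ ((a, q'), (r', b)) = t $ ((a, q'), (r', b))" for a q' r' b
    using sum_sum_of_bool_delta[of q' r' "\<lambda>q r. contract (matrix_unit q r) t $ a $ b"]
    by (simp add: sum_component place_block_nth contract_matrix_unit eq_commute[of q']
        eq_commute[of r'] del: sum_of_bool_mult_eq sum_mult_of_bool_eq)
  then show ?thesis by (simp add: vec_eq_iff)
qed

lemma tens_matrix_unit_nth:
  "tens (matrix_unit a q) (matrix_unit r b) $ ((a', q'), (r', b'))
     = of_bool (a' = a \<and> b' = b) * of_bool (q' = q \<and> r' = r)"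
  by (auto simp: tens_def matrix_unit_def)

lemma place_block_eq_sum_tens:
  "place_block q r g = (\<Sum>a\<in>UNIV. \<Sum>b\<in>UNIV. g $ a $ b *s tens (matrix_unit a q) (matrix_unit r b))"
proof -
  have "(\<Sum>a\<in>UNIV. \<Sum>b\<in>UNIV. g $ a $ b *s tens (matrix_unit a q) (matrix_unit r b))
      $ ((a', q'), (r', b')) = place_block q r g $ ((a', q'), (r', b'))" for a' q' r' b'
    using sum_sum_of_bool_delta[of a' b' "\<lambda>a b. g $ a $ b * of_bool (q' = q \<and> r' = r)"]
    by (simp add: sum_component tens_matrix_unit_nth place_block_nth eq_commute[of a']
        eq_commute[of b'] ac_simps del: sum_of_bool_mult_eq sum_mult_of_bool_eq)
  then show ?thesis by (simp add: vec_eq_iff)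
qed

lemma tens_balanced_in_span:
  "b \<in> Bs \<Longrightarrow> tens (x ** \<iota> b) y - tens x (\<iota> b ** y) \<in> vec.span (balrel Bs \<iota>)"
  by (rule vec.span_base) (auto simp: balrel_def)

lemma contract_balrel_span:
  assumes commute: "\<And>b. b \<in> Bs \<Longrightarrow> \<iota> b ** C = C ** \<iota> b"
    and "t \<in> vec.span (balrel Bs \<iota>)"
  shows "contract C t = 0"
  using assms(2)
proof (induction rule: vec.span_induct)
  case base
  show ?case by (rule vec.subspaceI) (auto simp: contract_add contract_scale contract_zero)
next
  case (step s)
  then obtain x y b where "b \<in> Bs" "s = tens (x ** \<iota> b) y - tens x (\<iota> b ** y)"
    unfolding balrel_def by blast
  then show ?case
    using commute by (simp add: contract_diff contract_tens matrix_mul_assoc[symmetric])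
qed

lemma place_block_in_span:
  assumes "\<And>a b. tens (matrix_unit a q) (matrix_unit r b) \<in> vec.span S"
  shows "place_block q r g \<in> vec.span S"
  unfolding place_block_eq_sum_tens using assms by (intro vec.span_sum vec.span_scale)

lemma place_block_diff_in_span:
  assumes "\<And>a b. tens (matrix_unit a q) (matrix_unit r b) - tens (matrix_unit a q') (matrix_unit r' b)
    \<in> vec.span S"
  shows "place_block q r g - place_block q' r' g \<in> vec.span S"
proof -
  have "place_block q r g - place_block q' r' g = (\<Sum>a\<in>UNIV. \<Sum>b\<in>UNIV. g $ a $ b *s
      (tens (matrix_unit a q) (matrix_unit r b) - tens (matrix_unit a q') (matrix_unit r' b)))"
    by (simp add: place_block_eq_sum_tens vector_ssub_ldistrib sum_subtractf)
  also have "\<dots> \<in> vec.span S"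
    using assms by (intro vec.span_sum vec.span_scale)
  finally show ?thesis .
qed

lemma tensor_iso_power_contract:
  assumes "\<And>i b. b \<in> Bs \<Longrightarrow> \<iota> b ** C i = C i ** \<iota> b"
    and "\<And>t. (\<forall>i. contract (C i) t = 0) \<Longrightarrow> t \<in> vec.span (balrel Bs \<iota>)"
    and "\<And>g. \<exists>t. \<forall>i. contract (C i) t = g i"
  shows "tensor_iso_power Bs \<iota> (\<lambda>i. contract (C i))"
  unfolding tensor_iso_power_def
  using assms contract_balrel_span[of Bs \<iota>]
  by (auto simp: contract_add contract_scale contract_tens matrix_mul_assoc)

text \<open>A basis of the centralizer of \<open>emb ` ut2\<close> in M_3(K).\<close>
definition emb_centralizer_basis :: "3 \<Rightarrow> 'k::field ^ 3 ^ 3" where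
  "emb_centralizer_basis i =
     (if i = 1 then matrix_unit 1 1 else if i = 2 then matrix_unit 2 1
      else matrix_unit 2 2 + matrix_unit 3 3)"

lemma emb_centralizer_basis_commute:
  "emb b ** emb_centralizer_basis i = emb_centralizer_basis i ** emb b"
  using exhaust_3[of i]
  by (auto simp: emb_centralizer_basis_def emb_def matrix_unit_def matrix_matrix_mult_def vec_eq_iff
      forall_3 sum_3)

lemma tens_matrix_unit_in_balrel_span:
  fixes a q r b :: 3
  assumes "(q, r) \<in> {(1, 2), (1, 3), (2, 3), (3, 1), (3, 2)}"
  shows "tens (matrix_unit a q) (matrix_unit r b)
    \<in> vec.span (balrel ut2 (emb :: 'k::field ^ 2 ^ 2 \<Rightarrow> _))"
proof -
  let ?W = "vec.span (balrel ut2 (emb :: 'k ^ 2 ^ 2 \<Rightarrow> _))"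
  have balanced: "tens (x ** emb c) y - tens x (emb c ** y) \<in> ?W" if "c \<in> ut2" for c x y
    using that by (rule tens_balanced_in_span)
  from assms consider "q = 1" "r = 2" | "q \<noteq> 3" "r = 3" | "q = 3" "r \<noteq> 3"
    by auto
  then show ?thesis
  proof cases
    case 1
    then show ?thesis
      using balanced[OF matrix_unit_in_ut2(1), of "matrix_unit a 1" "matrix_unit 3 b"]
      by (simp add: emb_matrix_unit matrix_unit_mult tens_zero) (metis minus_minus vec.span_neg)
  next
    case 2
    then show ?thesis
      using balanced[OF matrix_unit_in_ut2(2), of "matrix_unit a q" "matrix_unit r b"]
      by (simp add: emb_matrix_unit matrix_unit_mult tens_zero) (metis minus_minus vec.span_neg)
  next
    case 3
    then show ?thesis
      using balanced[OF matrix_unit_in_ut2(2), of "matrix_unit a q" "matrix_unit r b"]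
      by (simp add: emb_matrix_unit matrix_unit_mult tens_zero)
  qed
qed

lemma tens_matrix_unit_33_22_in_balrel_span:
  "tens (matrix_unit a 3) (matrix_unit 3 b) - tens (matrix_unit a 2) (matrix_unit 2 b)
     \<in> vec.span (balrel ut2 (emb :: 'k::field ^ 2 ^ 2 \<Rightarrow> _))"
  using tens_balanced_in_span[OF matrix_unit_in_ut2(1), of "matrix_unit a 2" emb "matrix_unit 3 b"]
  by (simp add: emb_matrix_unit matrix_unit_mult)

lemma contract_emb_centralizer_basis_kernel:
  assumes "\<forall>i. contract (emb_centralizer_basis i) t = 0"
  shows "t \<in> vec.span (balrel ut2 (emb :: 'k::field ^ 2 ^ 2 \<Rightarrow> _))"
proof -
  let ?W = "vec.span (balrel ut2 (emb :: 'k ^ 2 ^ 2 \<Rightarrow> _))"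
  let ?block = "\<lambda>q r. contract (matrix_unit q r) t"
  have live: "?block 1 1 = 0" "?block 2 1 = 0" "?block 2 2 = - ?block 3 3"
    using assms[rule_format, of 1] assms[rule_format, of 2] assms[rule_format, of 3]
    by (simp_all add: emb_centralizer_basis_def contract_add_matrix eq_neg_iff_add_eq_0)
  have dead: "place_block q r g \<in> ?W"
    if "(q, r) \<in> {(1, 2), (1, 3), (2, 3), (3, 1), (3, 2)}" for q r g
    using that by (intro place_block_in_span tens_matrix_unit_in_balrel_span)
  have "t = (\<Sum>q\<in>UNIV. \<Sum>r\<in>UNIV. place_block q r (?block q r))"
    by (rule sum_place_block_contract[symmetric])
  also have "\<dots> = place_block 1 2 (?block 1 2) + place_block 1 3 (?block 1 3)
      + place_block 2 3 (?block 2 3) + place_block 3 1 (?block 3 1) + place_block 3 2 (?block 3 2)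
      + (place_block 3 3 (?block 3 3) - place_block 2 2 (?block 3 3))"
    by (simp add: sum_3 live place_block_zero place_block_uminus)
  also have "\<dots> \<in> ?W"
    by (intro vec.span_add dead place_block_diff_in_span tens_matrix_unit_33_22_in_balrel_span)
      simp_all
  finally show ?thesis .
qed

lemma contract_emb_centralizer_basis_surj:
  "\<exists>t. \<forall>i. contract (emb_centralizer_basis i) t = (g i :: 'k::field ^ 3 ^ 3)"
proof
  let ?t = "place_block 1 1 (g 1) + place_block 2 1 (g 2) + place_block 2 2 (g 3)"
  show "\<forall>i. contract (emb_centralizer_basis i) ?t = g i"
    by (simp add: forall_3 contract_add contract_add_matrix contract_place_block
        emb_centralizer_basis_def matrix_unit_def)
qed

lemma tensor_iso_power_ut2_emb:
  "tensor_iso_power (ut2 :: ('k::field ^ 2 ^ 2) set) emb (\<lambda>i. contract (emb_centralizer_basis i))"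
  by (intro tensor_iso_power_contract emb_centralizer_basis_commute
      contract_emb_centralizer_basis_kernel contract_emb_centralizer_basis_surj)

section \<open>Right B-linear maps and bimodule projections\<close>

lemma right_hom_zero:
  assumes "right_hom Bs \<iota> \<phi>"
  shows "\<phi> 0 = 0"
proof -
  have "\<phi> (0 + 0) = \<phi> 0 + \<phi> 0" using assms unfolding right_hom_def by blast
  then show ?thesis by simp
qed

lemma right_fgp_dual_separates:
  fixes \<iota> :: "'k::field ^ 'm ^ 'm \<Rightarrow> 'k ^ 'n ^ 'n"
  assumes "right_fgp Bs \<iota>" "\<iota> 0 = 0"
    and vanish: "\<And>\<phi>. right_hom Bs \<iota> \<phi> \<Longrightarrow> \<phi> x = 0"
  shows "x = 0"
proof -
  obtain n :: nat and a \<phi> where hom: "\<forall>i<n. right_hom Bs \<iota> (\<phi> i)"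
    and dual_basis: "\<forall>x :: 'k ^ 'n ^ 'n. x = (\<Sum>i<n. a i ** \<iota> (\<phi> i x))"
    using assms(1) unfolding right_fgp_def by blast
  have "\<phi> i x = 0" if "i < n" for i
    using hom vanish that by blast
  then have "(\<Sum>i<n. a i ** \<iota> (\<phi> i x)) = 0"
    using assms(2) by (intro sum.neutral) simp
  then show ?thesis using dual_basis[rule_format, of x] by simp
qed

lemma emb_zero: "emb 0 = 0"
  by (simp add: emb_def vec_eq_iff forall_3)

lemma right_hom_ut2_emb_vanishes:
  assumes hom: "right_hom ut2 emb \<phi>"
  shows "\<phi> (matrix_unit 1 1) = (0 :: 'k::field ^ 2 ^ 2)"
proof -
  let ?Y = "\<phi> (matrix_unit 1 1)"
  have "?Y ** b = \<phi> (matrix_unit 1 1 ** emb b)" if "b \<in> ut2" for b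
    using hom that unfolding right_hom_def by simp
  then have "?Y ** matrix_unit 2 2 = 0" "?Y ** matrix_unit 1 2 = 0"
    using right_hom_zero[OF hom]
    by (simp_all add: matrix_unit_in_ut2 emb_matrix_unit matrix_unit_mult)
  then have "?Y $ i $ 2 = 0" "?Y $ i $ 1 = 0" for i
    using matrix_mult_matrix_unit_nth[of ?Y 2 2 i] matrix_mult_matrix_unit_nth[of ?Y 1 2 i]
    by simp_all
  then show ?thesis by (simp add: vec_eq_iff forall_2)
qed

lemma not_right_fgp_ut2_emb: "\<not> right_fgp (ut2 :: ('k::field ^ 2 ^ 2) set) (emb :: _ \<Rightarrow> 'k ^ 3 ^ 3)"
proof
  assume "right_fgp (ut2 :: ('k ^ 2 ^ 2) set) (emb :: _ \<Rightarrow> 'k ^ 3 ^ 3)"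
  then have "matrix_unit 1 1 = (0 :: 'k ^ 3 ^ 3)"
    using right_fgp_dual_separates emb_zero right_hom_ut2_emb_vanishes by metis
  then show False using matrix_unit_neq_0 by blast
qed

lemma no_bimod_projection_ut2_emb:
  "\<not> bimod_projection (ut2 :: ('k::field ^ 2 ^ 2) set) (emb :: _ \<Rightarrow> 'k ^ 3 ^ 3) E"
proof
  assume E: "bimod_projection (ut2 :: ('k ^ 2 ^ 2) set) emb E"
  have "matrix_unit 1 2 = E (emb (matrix_unit 1 2))"
    using E matrix_unit_in_ut2 unfolding bimod_projection_def by metis
  also have "emb (matrix_unit 1 2)
      = emb (matrix_unit 1 2) ** matrix_unit 3 2 ** emb (matrix_unit 1 2)"
    by (simp add: emb_matrix_unit matrix_unit_mult)
  also have "E \<dots> = matrix_unit 1 2 ** E (matrix_unit 3 2) ** matrix_unit 1 2"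
    using E matrix_unit_in_ut2 unfolding bimod_projection_def by blast
  also have "\<dots> = 0"
    using E by (intro matrix_unit_mult_mult_eq_0) (simp add: bimod_projection_def ut2_def)
  finally show False using matrix_unit_neq_0 by blast
qed

theorem mainTheorem12:
  shows "left_free_rank (ut2 :: ('k::field ^ 2 ^ 2) set) emb 3 \<and>
         (\<exists>f :: 3 \<Rightarrow> 'k ^ ((3 \<times> 3) \<times> (3 \<times> 3)) \<Rightarrow> 'k ^ 3 ^ 3.
             tensor_iso_power (ut2 :: ('k ^ 2 ^ 2) set) emb f) \<and>
         \<not> frobenius_ext (ut2 :: ('k ^ 2 ^ 2) set) (emb :: 'k ^ 2 ^ 2 \<Rightarrow> 'k ^ 3 ^ 3) \<and>
         \<not> (\<exists>E. bimod_projection (ut2 :: ('k ^ 2 ^ 2) set) (emb :: 'k ^ 2 ^ 2 \<Rightarrow> 'k ^ 3 ^ 3) E)"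
  using left_free_rank_ut2_emb tensor_iso_power_ut2_emb not_right_fgp_ut2_emb
    no_bimod_projection_ut2_emb
  unfolding frobenius_ext_def by blast

end
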